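(* Let $G$ be a finite graph and $a\in V(G)$. Suppose $G=H_1\cup\dots\cup H_m$ ($m\ge1$), where each $H_j$ is a connected subgraph of $G$ containing $a$ such that $H_j-a$ is nonempty and connected, $V(H_j)\cap V(H_l)=\{a\}$ for $j\ne l$, and every edge of $G$ lies in exactly one $H_j$. Call $H_j$ and $H_l$ equivalent if there is a graph isomorphism $H_j\to H_l$ mapping $a$ to $a$, and suppose there are $g$ equivalence classes, the $i$-th consisting of $m_i$ graphs each isomorphic (with $a\mapsto a$) to a graph $G_i$. Then for every positive integer $k$, $$D(G,k;a)=k\prod_{i=1}^g\binom{D(G_i,k;a)/k}{m_i}.$$
   Context: A $k$-labeling of a graph $X$ is a map $\phi:V(X)\to\{1,\dots,k\}$; an automorphism $\pi$ preserves $\phi$ if $\phi(\pi(v))=\phi(v)$ for all $v$. For a subgroup $\Gamma\le\mathrm{Aut}(X)$, $\phi$ is $\Gamma$-distinguishing if the only element of $\Gamma$ preserving $\phi$ is the identity; $\phi,\phi'$ are equivalent with respect to $\Gamma$ if some $\pi\in\Gamma$ satisfies $\phi'(\pi(v))=\phi(v)$ for all $v$; $D(X,k;\Gamma)$ is the number of $\Gamma$-equivalence classes of $\Gamma$-distinguishing $k$-labelings. For a vertex $a$, $\mathrm{Aut}(X;a)$ is the group of automorphisms of $X$ fixing $a$, and $D(X,k;a):=D(X,k;\mathrm{Aut}(X;a))$ (which is divisible by $k$). *)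

theory Defs
  imports Main "HOL-Library.FuncSet"
begin

definition graph :: "'a set \<Rightarrow> ('a \<Rightarrow> 'a \<Rightarrow> bool) \<Rightarrow> bool" where
  "graph V E \<longleftrightarrow> finite V \<and> (\<forall>x y. E x y \<longrightarrow> x \<in> V \<and> y \<in> V)
     \<and> (\<forall>x y. E x y \<longrightarrow> E y x) \<and> (\<forall>x. \<not> E x x)"

definition connected_graph :: "'a set \<Rightarrow> ('a \<Rightarrow> 'a \<Rightarrow> bool) \<Rightarrow> bool" where
  "connected_graph V E \<longleftrightarrow> V \<noteq> {} \<and>
     (\<forall>x\<in>V. \<forall>y\<in>V. (\<lambda>u v. u \<in> V \<and> v \<in> V \<and> E u v)\<^sup>*\<^sup>* x y)"

definition aut :: "'a set \<Rightarrow> ('a \<Rightarrow> 'a \<Rightarrow> bool) \<Rightarrow> ('a \<Rightarrow> 'a) set" where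
  "aut V E = {\<pi>. bij_betw \<pi> V V \<and> (\<forall>x\<in>V. \<forall>y\<in>V. E x y \<longleftrightarrow> E (\<pi> x) (\<pi> y))
                 \<and> (\<forall>x. x \<notin> V \<longrightarrow> \<pi> x = x)}"

definition aut_fix :: "'a set \<Rightarrow> ('a \<Rightarrow> 'a \<Rightarrow> bool) \<Rightarrow> 'a \<Rightarrow> ('a \<Rightarrow> 'a) set" where
  "aut_fix V E a = {\<pi> \<in> aut V E. \<pi> a = a}"

definition rooted_iso :: "'a set \<Rightarrow> ('a \<Rightarrow> 'a \<Rightarrow> bool) \<Rightarrow> 'a \<Rightarrow>
    'b set \<Rightarrow> ('b \<Rightarrow> 'b \<Rightarrow> bool) \<Rightarrow> 'b \<Rightarrow> bool" where
  "rooted_iso V1 E1 a1 V2 E2 a2 \<longleftrightarrow> (\<exists>f. bij_betw f V1 V2 \<and>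
     (\<forall>x\<in>V1. \<forall>y\<in>V1. E1 x y \<longleftrightarrow> E2 (f x) (f y)) \<and> f a1 = a2)"

definition dist_labelings :: "'a set \<Rightarrow> ('a \<Rightarrow> 'a) set \<Rightarrow> nat \<Rightarrow> ('a \<Rightarrow> nat) set" where
  "dist_labelings V \<Gamma> k = {\<phi> \<in> V \<rightarrow>\<^sub>E {1..k}.
      \<forall>\<pi>\<in>\<Gamma>. (\<forall>v\<in>V. \<phi> (\<pi> v) = \<phi> v) \<longrightarrow> \<pi> = id}"

definition lab_equiv :: "'a set \<Rightarrow> ('a \<Rightarrow> 'a) set \<Rightarrow> ('a \<Rightarrow> nat) \<Rightarrow> ('a \<Rightarrow> nat) \<Rightarrow> bool" where
  "lab_equiv V \<Gamma> \<phi> \<phi>' \<longleftrightarrow> (\<exists>\<pi>\<in>\<Gamma>. \<forall>v\<in>V. \<phi>' (\<pi> v) = \<phi> v)"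

definition D :: "'a set \<Rightarrow> ('a \<Rightarrow> 'a) set \<Rightarrow> nat \<Rightarrow> nat" where
  "D V \<Gamma> k = card ((\<lambda>\<phi>. {\<psi> \<in> dist_labelings V \<Gamma> k. lab_equiv V \<Gamma> \<phi> \<psi>})
                    ` dist_labelings V \<Gamma> k)"

definition D_root :: "'a set \<Rightarrow> ('a \<Rightarrow> 'a \<Rightarrow> bool) \<Rightarrow> nat \<Rightarrow> 'a \<Rightarrow> nat" where
  "D_root V E k a = D V (aut_fix V E a) k"

end

(*
  An automorphism of G fixing a maps every branch H_j - a, being a component of G - a, onto
  an isomorphic branch; conversely, a type-preserving permutation of the branches together
  with root-fixing automorphisms of the models G_i glues to an automorphism of G fixing a.
  Hence a labeling of G is distinguishing iff its restriction to every branch is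
  distinguishing and the restrictions to distinct branches of the same type are inequivalent,
  and its equivalence class is determined by the colour of a together with, for every type i,
  the m_i-element set of classes of the restrictions to the branches of type i.  These are
  classes of distinguishing labelings of G_i giving the root the colour of a; there are
  D(G_i,k;a)/k of them for each colour, because recolouring the root permutes the classes.
*)

theory Submission
  imports Defs
begin

section \<open>Graph isomorphisms and automorphisms\<close>

definition graph_iso ::
    "'a set \<Rightarrow> ('a \<Rightarrow> 'a \<Rightarrow> bool) \<Rightarrow> 'b set \<Rightarrow> ('b \<Rightarrow> 'b \<Rightarrow> bool) \<Rightarrow> ('a \<Rightarrow> 'b) \<Rightarrow> bool" where
  "graph_iso W1 F1 W2 F2 f \<longleftrightarrow> bij_betw f W1 W2 \<and> (\<forall>x\<in>W1. \<forall>y\<in>W1. F1 x y \<longleftrightarrow> F2 (f x) (f y))"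

lemma graph_iso_mem: "graph_iso W1 F1 W2 F2 f \<Longrightarrow> x \<in> W1 \<Longrightarrow> f x \<in> W2"
  unfolding graph_iso_def using bij_betwE by blast

lemma graph_iso_adj: "graph_iso W1 F1 W2 F2 f \<Longrightarrow> x \<in> W1 \<Longrightarrow> y \<in> W1 \<Longrightarrow> F1 x y \<longleftrightarrow> F2 (f x) (f y)"
  by (simp add: graph_iso_def)

lemma graph_iso_inj: "graph_iso W1 F1 W2 F2 f \<Longrightarrow> x \<in> W1 \<Longrightarrow> y \<in> W1 \<Longrightarrow> f x = f y \<longleftrightarrow> x = y"
  unfolding graph_iso_def bij_betw_def inj_on_def by blast

lemma graph_iso_inv_into:
  assumes "graph_iso W1 F1 W2 F2 f"
  shows "graph_iso W2 F2 W1 F1 (inv_into W1 f)"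
proof -
  have f: "bij_betw f W1 W2" using assms by (simp add: graph_iso_def)
  have g: "bij_betw (inv_into W1 f) W2 W1" using f by (rule bij_betw_inv_into)
  have "F2 x y \<longleftrightarrow> F1 (inv_into W1 f x) (inv_into W1 f y)" if "x \<in> W2" "y \<in> W2" for x y
    using graph_iso_adj[OF assms, of "inv_into W1 f x" "inv_into W1 f y"] that
      bij_betwE[OF g] bij_betw_inv_into_right[OF f] by simp
  with g show ?thesis by (simp add: graph_iso_def)
qed

lemma graph_iso_comp:
  assumes f: "graph_iso W1 F1 W2 F2 f" and h: "graph_iso W2 F2 W3 F3 h"
  shows "graph_iso W1 F1 W3 F3 (h \<circ> f)"
proof -
  have "bij_betw (h \<circ> f) W1 W3"
    using f h by (auto simp: graph_iso_def intro: bij_betw_trans)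
  moreover have "F1 x y \<longleftrightarrow> F3 (h (f x)) (h (f y))" if "x \<in> W1" "y \<in> W1" for x y
    using graph_iso_adj[OF f that] graph_iso_adj[OF h graph_iso_mem[OF f] graph_iso_mem[OF f]] that
    by blast
  ultimately show ?thesis by (simp add: graph_iso_def)
qed

lemma graph_iso_cong:
  "(\<And>x. x \<in> W1 \<Longrightarrow> f x = h x) \<Longrightarrow> graph_iso W1 F1 W2 F2 f \<longleftrightarrow> graph_iso W1 F1 W2 F2 h"
  unfolding graph_iso_def using bij_betw_cong[of W1 f h W2] by auto

lemma rooted_iso_iff_graph_iso:
  "rooted_iso W1 F1 a1 W2 F2 a2 \<longleftrightarrow> (\<exists>f. graph_iso W1 F1 W2 F2 f \<and> f a1 = a2)"
  by (simp add: rooted_iso_def graph_iso_def)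

lemma aut_iff_graph_iso: "\<pi> \<in> aut W F \<longleftrightarrow> graph_iso W F W F \<pi> \<and> (\<forall>x. x \<notin> W \<longrightarrow> \<pi> x = x)"
  by (auto simp: aut_def graph_iso_def)

lemma aut_mem: "\<pi> \<in> aut W F \<Longrightarrow> x \<in> W \<Longrightarrow> \<pi> x \<in> W"
  unfolding aut_def using bij_betwE by blast

lemma aut_adj: "\<pi> \<in> aut W F \<Longrightarrow> x \<in> W \<Longrightarrow> y \<in> W \<Longrightarrow> F x y \<longleftrightarrow> F (\<pi> x) (\<pi> y)"
  unfolding aut_def by blast

lemma aut_imp_bij:
  assumes "\<pi> \<in> aut W F"
  shows "bij \<pi>"
proof -
  have "bij_betw \<pi> W W" and fix_out: "\<forall>x. x \<notin> W \<longrightarrow> \<pi> x = x"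
    using assms by (auto simp: aut_def)
  moreover have "bij_betw \<pi> (-W) (-W)"
    using fix_out unfolding bij_betw_def inj_on_def by force
  ultimately have "bij_betw \<pi> (W \<union> -W) (W \<union> -W)"
    by (intro bij_betw_combine) auto
  thus ?thesis by simp
qed

lemma id_in_aut: "id \<in> aut W F"
  by (auto simp: aut_def)

lemma aut_comp: "\<pi> \<in> aut W F \<Longrightarrow> \<rho> \<in> aut W F \<Longrightarrow> \<pi> \<circ> \<rho> \<in> aut W F"
  unfolding aut_iff_graph_iso using graph_iso_comp by (metis comp_apply)

lemma inv_in_aut:
  assumes "\<pi> \<in> aut W F"
  shows "inv \<pi> \<in> aut W F"
proof -
  have bij: "bij \<pi>" using assms by (rule aut_imp_bij)
  have iso: "graph_iso W F W F \<pi>" and fix_out: "\<forall>x. x \<notin> W \<longrightarrow> \<pi> x = x"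
    using assms by (auto simp: aut_iff_graph_iso)
  have "inv_into W \<pi> x = inv \<pi> x" if "x \<in> W" for x
  proof -
    have "inv_into W \<pi> x \<in> W" "\<pi> (inv_into W \<pi> x) = x"
      using iso that by (auto simp: graph_iso_def bij_betw_def inv_into_into f_inv_into_f)
    thus ?thesis using bij by (simp add: bij_inv_eq_iff)
  qed
  hence "graph_iso W F W F (inv \<pi>)"
    using graph_iso_inv_into[OF iso] graph_iso_cong by blast
  moreover have "inv \<pi> x = x" if "x \<notin> W" for x
    using fix_out that bij by (metis bij_is_inj inv_f_eq)
  ultimately show ?thesis by (simp add: aut_iff_graph_iso)
qed

lemma id_in_aut_fix: "id \<in> aut_fix W F r"
  by (simp add: aut_fix_def id_in_aut)

lemma aut_fix_comp: "\<pi> \<in> aut_fix W F r \<Longrightarrow> \<rho> \<in> aut_fix W F r \<Longrightarrow> \<pi> \<circ> \<rho> \<in> aut_fix W F r"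
  by (simp add: aut_fix_def aut_comp)

lemma inv_in_aut_fix:
  assumes "\<pi> \<in> aut_fix W F r"
  shows "inv \<pi> \<in> aut_fix W F r"
  using assms inv_in_aut aut_imp_bij unfolding aut_fix_def
  by (metis (mono_tags, lifting) bij_is_inj inv_f_eq mem_Collect_eq)

lemma aut_fix_neq_root: "\<pi> \<in> aut_fix W F r \<Longrightarrow> v \<noteq> r \<Longrightarrow> \<pi> v \<noteq> r"
  unfolding aut_fix_def using aut_imp_bij bij_is_inj by (fastforce dest: injD)

section \<open>Classes of distinguishing labelings\<close>

definition lab_class :: "'a set \<Rightarrow> ('a \<Rightarrow> 'a) set \<Rightarrow> nat \<Rightarrow> ('a \<Rightarrow> nat) \<Rightarrow> ('a \<Rightarrow> nat) set" where
  "lab_class W \<Gamma> k \<phi> = {\<psi> \<in> dist_labelings W \<Gamma> k. lab_equiv W \<Gamma> \<phi> \<psi>}"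

lemma D_eq_card_lab_classes: "D W \<Gamma> k = card (lab_class W \<Gamma> k ` dist_labelings W \<Gamma> k)"
  by (simp add: D_def lab_class_def)

lemma finite_dist_labelings: "finite W \<Longrightarrow> finite (dist_labelings W \<Gamma> k)"
  by (rule finite_subset[of _ "W \<rightarrow>\<^sub>E {1..k}"]) (auto simp: dist_labelings_def finite_PiE)

lemma lab_equiv_refl: "lab_equiv W (aut_fix W F r) \<phi> \<phi>"
  unfolding lab_equiv_def using id_in_aut_fix by (metis id_apply)

lemma lab_equiv_sym:
  assumes "lab_equiv W (aut_fix W F r) \<phi> \<psi>"
  shows "lab_equiv W (aut_fix W F r) \<psi> \<phi>"
proof -
  obtain \<pi> where \<pi>: "\<pi> \<in> aut_fix W F r" and \<psi>\<phi>: "\<forall>v\<in>W. \<psi> (\<pi> v) = \<phi> v"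
    using assms by (auto simp: lab_equiv_def)
  have "\<pi> \<in> aut W F" using \<pi> by (simp add: aut_fix_def)
  hence "\<forall>v\<in>W. \<phi> (inv \<pi> v) = \<psi> v"
    using \<psi>\<phi> aut_mem[OF inv_in_aut] aut_imp_bij by (metis bij_inv_eq_iff)
  thus ?thesis using inv_in_aut_fix[OF \<pi>] by (auto simp: lab_equiv_def)
qed

lemma lab_equiv_trans:
  assumes "lab_equiv W (aut_fix W F r) \<phi> \<psi>" "lab_equiv W (aut_fix W F r) \<psi> \<chi>"
  shows "lab_equiv W (aut_fix W F r) \<phi> \<chi>"
proof -
  obtain \<pi> \<rho> where \<pi>: "\<pi> \<in> aut_fix W F r" "\<forall>v\<in>W. \<psi> (\<pi> v) = \<phi> v"
    and \<rho>: "\<rho> \<in> aut_fix W F r" "\<forall>v\<in>W. \<chi> (\<rho> v) = \<psi> v"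
    using assms by (auto simp: lab_equiv_def)
  have "\<forall>v\<in>W. \<chi> ((\<rho> \<circ> \<pi>) v) = \<phi> v"
    using \<pi> \<rho> aut_mem[of \<pi> W F] by (auto simp: aut_fix_def)
  thus ?thesis using aut_fix_comp[OF \<rho>(1) \<pi>(1)] unfolding lab_equiv_def by (metis comp_apply)
qed

lemma lab_equiv_root: "lab_equiv W (aut_fix W F r) \<phi> \<psi> \<Longrightarrow> r \<in> W \<Longrightarrow> \<phi> r = \<psi> r"
  by (auto simp: lab_equiv_def aut_fix_def)

lemma lab_class_eq_iff:
  assumes "\<phi> \<in> dist_labelings W (aut_fix W F r) k" "\<psi> \<in> dist_labelings W (aut_fix W F r) k"
  shows "lab_class W (aut_fix W F r) k \<phi> = lab_class W (aut_fix W F r) k \<psi>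
    \<longleftrightarrow> lab_equiv W (aut_fix W F r) \<phi> \<psi>"
proof
  assume "lab_class W (aut_fix W F r) k \<phi> = lab_class W (aut_fix W F r) k \<psi>"
  moreover have "\<psi> \<in> lab_class W (aut_fix W F r) k \<psi>"
    using assms lab_equiv_refl by (simp add: lab_class_def)
  ultimately show "lab_equiv W (aut_fix W F r) \<phi> \<psi>" by (auto simp: lab_class_def)
next
  assume e: "lab_equiv W (aut_fix W F r) \<phi> \<psi>"
  have "lab_equiv W (aut_fix W F r) \<phi> \<chi> \<longleftrightarrow> lab_equiv W (aut_fix W F r) \<psi> \<chi>" for \<chi>
    using lab_equiv_trans[OF e] lab_equiv_trans[OF lab_equiv_sym[OF e]] by blast
  thus "lab_class W (aut_fix W F r) k \<phi> = lab_class W (aut_fix W F r) k \<psi>"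
    by (simp add: lab_class_def)
qed

lemma card_image_eq_if_same_kernel:
  assumes "\<forall>x\<in>A. \<forall>y\<in>A. f x = f y \<longleftrightarrow> h x = h y"
  shows "card (f ` A) = card (h ` A)"
proof -
  define q where "q y = h (inv_into A f y)" for y
  have q: "q (f x) = h x" if "x \<in> A" for x
    using assms that inv_into_into[of "f x" f A] f_inv_into_f[of "f x" f A] by (simp add: q_def)
  hence "inj_on q (f ` A)" using assms by (auto simp: inj_on_def)
  moreover have "q ` f ` A = h ` A" using q by (force simp: image_iff)
  ultimately show ?thesis by (metis card_image)
qed

definition dist_labelings_root ::
    "'a set \<Rightarrow> ('a \<Rightarrow> 'a \<Rightarrow> bool) \<Rightarrow> 'a \<Rightarrow> nat \<Rightarrow> nat \<Rightarrow> ('a \<Rightarrow> nat) set" where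
  "dist_labelings_root W F r k c = {\<phi> \<in> dist_labelings W (aut_fix W F r) k. \<phi> r = c}"

context
  fixes W :: "'a set" and F :: "'a \<Rightarrow> 'a \<Rightarrow> bool" and r :: 'a and k :: nat
  assumes finite_W: "finite W" and root_in_W: "r \<in> W"
begin

lemma recolour_root_compose_iff:
  assumes "\<pi> \<in> aut_fix W F r" and "\<phi> r = \<psi> r"
  shows "(\<forall>v\<in>W. (\<psi>(r := c)) (\<pi> v) = (\<phi>(r := c)) v) \<longleftrightarrow> (\<forall>v\<in>W. \<psi> (\<pi> v) = \<phi> v)"
proof -
  have "(\<psi>(r := c)) (\<pi> v) = (\<phi>(r := c)) v \<longleftrightarrow> \<psi> (\<pi> v) = \<phi> v" for v
  proof (cases "v = r")
    case True
    thus ?thesis using assms by (simp add: aut_fix_def)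
  next
    case False
    thus ?thesis using aut_fix_neq_root[OF assms(1) False] by simp
  qed
  thus ?thesis by simp
qed

lemma recolour_root_dist:
  assumes "\<phi> \<in> dist_labelings W (aut_fix W F r) k" and "c \<in> {1..k}"
  shows "\<phi>(r := c) \<in> dist_labelings W (aut_fix W F r) k"
  using assms root_in_W recolour_root_compose_iff[of _ \<phi> \<phi> c]
  by (auto simp: dist_labelings_def PiE_def Pi_def extensional_def)

lemma lab_equiv_recolour_root:
  assumes "\<phi> r = \<psi> r"
  shows "lab_equiv W (aut_fix W F r) (\<phi>(r := c)) (\<psi>(r := c)) \<longleftrightarrow> lab_equiv W (aut_fix W F r) \<phi> \<psi>"
  unfolding lab_equiv_def using recolour_root_compose_iff[of _ \<phi> \<psi> c] assms by blast

text \<open>Recolouring the root is a bijection between the classes with root colour \<open>c\<close> and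
  those with root colour \<open>c'\<close>.\<close>

lemma card_lab_classes_root_colour_eq:
  assumes "c \<in> {1..k}" and "c' \<in> {1..k}"
  shows "card (lab_class W (aut_fix W F r) k ` dist_labelings_root W F r k c')
       = card (lab_class W (aut_fix W F r) k ` dist_labelings_root W F r k c)"
    (is "card (?cl ` ?A c') = card (?cl ` ?A c)")
proof -
  define h where "h \<phi> = \<phi>(r := c')" for \<phi> :: "'a \<Rightarrow> nat"
  have "h ` ?A c = ?A c'"
  proof
    show "h ` ?A c \<subseteq> ?A c'"
      using recolour_root_dist assms by (auto simp: h_def dist_labelings_root_def)
    show "?A c' \<subseteq> h ` ?A c"
    proof
      fix \<psi> assume "\<psi> \<in> ?A c'"
      hence "\<psi>(r := c) \<in> ?A c" "\<psi> = h (\<psi>(r := c))"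
        using recolour_root_dist assms by (auto simp: h_def dist_labelings_root_def)
      thus "\<psi> \<in> h ` ?A c" by blast
    qed
  qed
  hence "card (?cl ` ?A c') = card ((?cl \<circ> h) ` ?A c)" by (metis image_comp)
  also have "\<dots> = card (?cl ` ?A c)"
  proof (rule card_image_eq_if_same_kernel, intro ballI)
    fix \<phi> \<psi> assume \<phi>\<psi>: "\<phi> \<in> ?A c" "\<psi> \<in> ?A c"
    hence "h \<phi> \<in> ?A c'" "h \<psi> \<in> ?A c'" using \<open>h ` ?A c = ?A c'\<close> by auto
    hence "(?cl \<circ> h) \<phi> = (?cl \<circ> h) \<psi> \<longleftrightarrow> lab_equiv W (aut_fix W F r) (h \<phi>) (h \<psi>)"
      using lab_class_eq_iff[of "h \<phi>" W F r k "h \<psi>"] by (simp add: dist_labelings_root_def)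
    also have "\<dots> \<longleftrightarrow> lab_equiv W (aut_fix W F r) \<phi> \<psi>"
      using \<phi>\<psi> lab_equiv_recolour_root by (simp add: h_def dist_labelings_root_def)
    also have "\<dots> \<longleftrightarrow> ?cl \<phi> = ?cl \<psi>"
      using \<phi>\<psi> lab_class_eq_iff[of \<phi> W F r k \<psi>] by (simp add: dist_labelings_root_def)
    finally show "(?cl \<circ> h) \<phi> = (?cl \<circ> h) \<psi> \<longleftrightarrow> ?cl \<phi> = ?cl \<psi>" .
  qed
  finally show ?thesis .
qed

lemma D_root_eq_sum_root_colours:
  "D_root W F k r =
    (\<Sum>c\<in>{1..k}. card (lab_class W (aut_fix W F r) k ` dist_labelings_root W F r k c))"
proof -
  let ?cl = "lab_class W (aut_fix W F r) k" and ?A = "dist_labelings_root W F r k"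
  have "dist_labelings W (aut_fix W F r) k = (\<Union>c\<in>{1..k}. ?A c)"
    using root_in_W by (auto simp: dist_labelings_root_def dist_labelings_def)
  hence "?cl ` dist_labelings W (aut_fix W F r) k = (\<Union>c\<in>{1..k}. ?cl ` ?A c)" by blast
  moreover have "card (\<Union>c\<in>{1..k}. ?cl ` ?A c) = (\<Sum>c\<in>{1..k}. card (?cl ` ?A c))"
  proof (rule card_UN_disjoint)
    show "\<forall>c\<in>{1..k}. finite (?cl ` ?A c)"
      using finite_dist_labelings[OF finite_W] by (auto simp: dist_labelings_root_def)
    show "\<forall>c\<in>{1..k}. \<forall>c'\<in>{1..k}. c \<noteq> c' \<longrightarrow> ?cl ` ?A c \<inter> ?cl ` ?A c' = {}"
    proof (intro ballI impI equals0I)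
      fix c c' X assume "c \<noteq> c'" and "X \<in> ?cl ` ?A c \<inter> ?cl ` ?A c'"
      then obtain \<phi> \<psi> where "\<phi> \<in> ?A c" "\<psi> \<in> ?A c'" "?cl \<phi> = ?cl \<psi>" by blast
      thus False
        using \<open>c \<noteq> c'\<close> lab_class_eq_iff lab_equiv_root root_in_W
        by (metis (mono_tags, lifting) dist_labelings_root_def mem_Collect_eq)
    qed
  qed simp
  ultimately show ?thesis by (simp add: D_root_def D_eq_card_lab_classes)
qed

lemma card_lab_classes_root_colour:
  assumes "c \<in> {1..k}"
  shows "card (lab_class W (aut_fix W F r) k ` dist_labelings_root W F r k c)
    = D_root W F k r div k"
proof -
  have "D_root W F k r = k * card (lab_class W (aut_fix W F r) k ` dist_labelings_root W F r k c)"
    using D_root_eq_sum_root_colours card_lab_classes_root_colour_eq[OF assms] by simp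
  thus ?thesis using assms by simp
qed

end

section \<open>Decomposition at the root\<close>

text \<open>The branches \<open>H\<^sub>j = (HV j, HE j)\<close>, \<open>j \<in> J\<close>, are glued at the root \<open>a\<close>;
  \<open>cls j \<in> I\<close> is the rooted isomorphism type of \<open>H\<^sub>j\<close>, whose model \<open>G\<^sub>i\<close> is
  \<open>(GV i, GE i)\<close> rooted at \<open>r i\<close>, so that \<open>m\<^sub>i = card {j \<in> J. cls j = i}\<close>.\<close>

locale rooted_branch_decomposition =
  fixes V :: "'a set" and E :: "'a \<Rightarrow> 'a \<Rightarrow> bool" and a :: 'a
    and J :: "'j set" and HV :: "'j \<Rightarrow> 'a set" and HE :: "'j \<Rightarrow> 'a \<Rightarrow> 'a \<Rightarrow> bool"
    and I :: "'i set" and cls :: "'j \<Rightarrow> 'i"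
    and GV :: "'i \<Rightarrow> 'b set" and GE :: "'i \<Rightarrow> 'b \<Rightarrow> 'b \<Rightarrow> bool" and r :: "'i \<Rightarrow> 'b"
  assumes graph: "graph V E" and root_in_V: "a \<in> V"
    and finite_branches: "finite J"
    and branch_graph: "j \<in> J \<Longrightarrow> graph (HV j) (HE j)"
    and branch_edge: "j \<in> J \<Longrightarrow> HE j x y \<Longrightarrow> E x y"
    and root_in_branch: "j \<in> J \<Longrightarrow> a \<in> HV j"
    and branch_minus_root_connected:
      "j \<in> J \<Longrightarrow> connected_graph (HV j - {a}) (\<lambda>x y. x \<noteq> a \<and> y \<noteq> a \<and> HE j x y)"
    and branches_meet_at_root: "j \<in> J \<Longrightarrow> l \<in> J \<Longrightarrow> j \<noteq> l \<Longrightarrow> HV j \<inter> HV l = {a}"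
    and V_eq_Union_branches: "V = (\<Union>j\<in>J. HV j)"
    and edge_in_branch: "E x y \<Longrightarrow> \<exists>j\<in>J. HE j x y"
    and cls_eq_if_rooted_iso:
      "j \<in> J \<Longrightarrow> l \<in> J \<Longrightarrow> rooted_iso (HV j) (HE j) a (HV l) (HE l) a \<Longrightarrow> cls j = cls l"
    and cls_mem: "j \<in> J \<Longrightarrow> cls j \<in> I"
    and finite_types: "finite I"
    and finite_model: "i \<in> I \<Longrightarrow> finite (GV i)"
    and model_root_mem: "i \<in> I \<Longrightarrow> r i \<in> GV i"
    and rooted_iso_model: "j \<in> J \<Longrightarrow> rooted_iso (HV j) (HE j) a (GV (cls j)) (GE (cls j)) (r (cls j))"
begin

abbreviation "aut_root \<equiv> aut_fix V E a"
abbreviation "model_aut i \<equiv> aut_fix (GV i) (GE i) (r i)"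

lemma finite_V: "finite V"
  using graph by (simp add: graph_def)

lemma branch_subset: "j \<in> J \<Longrightarrow> HV j \<subseteq> V"
  using V_eq_Union_branches by blast

lemma branch_edge_mem: "j \<in> J \<Longrightarrow> HE j u v \<Longrightarrow> u \<in> HV j \<and> v \<in> HV j"
  using branch_graph unfolding graph_def by blast

lemma branch_unique: "j \<in> J \<Longrightarrow> l \<in> J \<Longrightarrow> v \<in> HV j \<Longrightarrow> v \<in> HV l \<Longrightarrow> v \<noteq> a \<Longrightarrow> j = l"
  using branches_meet_at_root by blast

lemma E_iff_branch_edge:
  assumes "j \<in> J" "u \<in> HV j" "v \<in> HV j"
  shows "E u v \<longleftrightarrow> HE j u v"
proof
  assume "E u v"
  then obtain l where l: "l \<in> J" "HE l u v" using edge_in_branch by blast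
  have "u \<noteq> v" using \<open>E u v\<close> graph by (auto simp: graph_def)
  hence "u \<noteq> a \<or> v \<noteq> a" by blast
  hence "l = j" using branch_unique[OF l(1) assms(1)] branch_edge_mem[OF l] assms(2,3) by blast
  thus "HE j u v" using l by simp
qed (use branch_edge assms in blast)

lemma E_iff_ex_branch: "E u v \<longleftrightarrow> (\<exists>j\<in>J. u \<in> HV j \<and> v \<in> HV j \<and> HE j u v)"
  using edge_in_branch branch_edge_mem branch_edge by blast

lemma branch_has_nonroot: "j \<in> J \<Longrightarrow> \<exists>w\<in>HV j. w \<noteq> a"
  using branch_minus_root_connected unfolding connected_graph_def by blast

definition branch :: "'a \<Rightarrow> 'j" where
  "branch v = (THE j. j \<in> J \<and> v \<in> HV j)"

lemma branch_eqI: "j \<in> J \<Longrightarrow> v \<in> HV j \<Longrightarrow> v \<noteq> a \<Longrightarrow> branch v = j"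
  unfolding branch_def using branch_unique by (intro the_equality) auto

lemma branch_mem:
  assumes "v \<in> V" "v \<noteq> a"
  shows "branch v \<in> J" "v \<in> HV (branch v)"
proof -
  obtain j where "j \<in> J" "v \<in> HV j" using assms V_eq_Union_branches by blast
  thus "branch v \<in> J" "v \<in> HV (branch v)" using branch_eqI assms by auto
qed

definition model_iso :: "'j \<Rightarrow> 'a \<Rightarrow> 'b" where
  "model_iso j = (SOME f. graph_iso (HV j) (HE j) (GV (cls j)) (GE (cls j)) f \<and> f a = r (cls j))"

lemma model_iso:
  assumes "j \<in> J"
  shows "graph_iso (HV j) (HE j) (GV (cls j)) (GE (cls j)) (model_iso j)"
    and "model_iso j a = r (cls j)"
  using someI_ex[OF rooted_iso_model[OF assms, unfolded rooted_iso_iff_graph_iso]]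
  by (simp_all add: model_iso_def)

definition branch_emb :: "'j \<Rightarrow> 'b \<Rightarrow> 'a" where
  "branch_emb j = inv_into (HV j) (model_iso j)"

lemma branch_emb_iso: "j \<in> J \<Longrightarrow> graph_iso (GV (cls j)) (GE (cls j)) (HV j) (HE j) (branch_emb j)"
  unfolding branch_emb_def by (rule graph_iso_inv_into[OF model_iso(1)])

lemma branch_emb_model_iso: "j \<in> J \<Longrightarrow> v \<in> HV j \<Longrightarrow> branch_emb j (model_iso j v) = v"
  using model_iso(1) unfolding branch_emb_def graph_iso_def
  by (blast intro: bij_betw_inv_into_left)

lemma model_iso_branch_emb: "j \<in> J \<Longrightarrow> x \<in> GV (cls j) \<Longrightarrow> model_iso j (branch_emb j x) = x"
  using model_iso(1) unfolding branch_emb_def graph_iso_def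
  by (blast intro: bij_betw_inv_into_right)

lemma branch_emb_mem: "j \<in> J \<Longrightarrow> x \<in> GV (cls j) \<Longrightarrow> branch_emb j x \<in> HV j"
  by (rule graph_iso_mem[OF branch_emb_iso])

lemma model_iso_mem: "j \<in> J \<Longrightarrow> v \<in> HV j \<Longrightarrow> model_iso j v \<in> GV (cls j)"
  by (rule graph_iso_mem[OF model_iso(1)])

lemma branch_emb_root: "j \<in> J \<Longrightarrow> branch_emb j (r (cls j)) = a"
  using branch_emb_model_iso[OF _ root_in_branch] model_iso(2) by metis

lemma branch_emb_eq_root_iff:
  "j \<in> J \<Longrightarrow> x \<in> GV (cls j) \<Longrightarrow> branch_emb j x = a \<longleftrightarrow> x = r (cls j)"
  using model_iso_branch_emb model_iso(2) branch_emb_root by metis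

lemma branch_emb_cover:
  assumes "v \<in> V"
  shows "\<exists>j\<in>J. \<exists>x\<in>GV (cls j). v = branch_emb j x"
proof -
  obtain j where "j \<in> J" "v \<in> HV j" using assms V_eq_Union_branches by blast
  thus ?thesis using branch_emb_model_iso model_iso_mem by metis
qed

section \<open>Gluing and splitting automorphisms\<close>

definition glue :: "('j \<Rightarrow> 'a \<Rightarrow> 'a) \<Rightarrow> 'a \<Rightarrow> 'a" where
  "glue p v = (if v \<in> V - {a} then p (branch v) v else v)"

context
  fixes \<sigma> :: "'j \<Rightarrow> 'j" and p :: "'j \<Rightarrow> 'a \<Rightarrow> 'a"
  assumes \<sigma>_bij: "bij_betw \<sigma> J J"
    and p_iso: "\<And>j. j \<in> J \<Longrightarrow> graph_iso (HV j) (HE j) (HV (\<sigma> j)) (HE (\<sigma> j)) (p j)"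
    and p_root: "\<And>j. j \<in> J \<Longrightarrow> p j a = a"
begin

lemma glue_eq:
  assumes "j \<in> J" "v \<in> HV j"
  shows "glue p v = p j v"
proof -
  have "v \<in> V" using assms branch_subset by blast
  thus ?thesis using assms p_root branch_eqI by (auto simp: glue_def)
qed

lemma glue_neq_root: "j \<in> J \<Longrightarrow> v \<in> HV j \<Longrightarrow> v \<noteq> a \<Longrightarrow> glue p v \<noteq> a"
  using glue_eq graph_iso_inj[OF p_iso _ root_in_branch] p_root by metis

lemma glue_mem_branch_iff:
  assumes "j \<in> J" and "u \<in> V"
  shows "glue p u \<in> HV (\<sigma> j) \<longleftrightarrow> u \<in> HV j"
proof (cases "u = a")
  case True
  thus ?thesis using assms \<sigma>_bij root_in_branch bij_betwE by (fastforce simp: glue_def)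
next
  case False
  then obtain l where l: "l \<in> J" "u \<in> HV l" using assms(2) branch_mem by blast
  have "glue p u \<in> HV (\<sigma> l)" "glue p u \<noteq> a"
    using glue_eq[OF l] graph_iso_mem[OF p_iso[OF l(1)] l(2)] glue_neq_root[OF l False] by auto
  hence "glue p u \<in> HV (\<sigma> j) \<longleftrightarrow> \<sigma> j = \<sigma> l"
    using branch_unique assms(1) l(1) \<sigma>_bij bij_betwE by metis
  also have "\<dots> \<longleftrightarrow> j = l"
    using \<sigma>_bij assms(1) l(1) by (auto simp: bij_betw_def inj_on_def)
  also have "\<dots> \<longleftrightarrow> u \<in> HV j"
    using branch_unique assms(1) l False by blast
  finally show ?thesis .
qed

lemma glue_adj:
  assumes "u \<in> V" "v \<in> V"
  shows "E u v \<longleftrightarrow> E (glue p u) (glue p v)"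
proof -
  have "(u \<in> HV j \<and> v \<in> HV j \<and> HE j u v) \<longleftrightarrow>
      (glue p u \<in> HV (\<sigma> j) \<and> glue p v \<in> HV (\<sigma> j) \<and> HE (\<sigma> j) (glue p u) (glue p v))"
    if "j \<in> J" for j
    using glue_mem_branch_iff[OF that] assms glue_eq[OF that] graph_iso_adj[OF p_iso[OF that]]
    by metis
  hence "E u v \<longleftrightarrow>
      (\<exists>j\<in>J. glue p u \<in> HV (\<sigma> j) \<and> glue p v \<in> HV (\<sigma> j) \<and> HE (\<sigma> j) (glue p u) (glue p v))"
    using E_iff_ex_branch by blast
  also have "\<dots> \<longleftrightarrow>
      (\<exists>l\<in>\<sigma> ` J. glue p u \<in> HV l \<and> glue p v \<in> HV l \<and> HE l (glue p u) (glue p v))"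
    by simp
  also have "\<dots> \<longleftrightarrow> E (glue p u) (glue p v)"
    using \<sigma>_bij E_iff_ex_branch by (simp add: bij_betw_def)
  finally show ?thesis .
qed

lemma glue_in_aut_root: "glue p \<in> aut_root"
proof -
  have into: "glue p u \<in> V" if "u \<in> V" for u
    using that glue_mem_branch_iff V_eq_Union_branches \<sigma>_bij bij_betwE by (metis UN_iff)
  have "inj_on (glue p) V"
  proof
    fix u v assume u: "u \<in> V" and v: "v \<in> V" and eq: "glue p u = glue p v"
    obtain j where j: "j \<in> J" "u \<in> HV j" using u V_eq_Union_branches by blast
    hence "v \<in> HV j" using glue_mem_branch_iff[OF j(1)] u v eq by metis
    thus "u = v" using eq glue_eq[OF j(1)] j graph_iso_inj[OF p_iso[OF j(1)]] by metis
  qed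
  hence "bij_betw (glue p) V V"
    using endo_inj_surj[OF finite_V] into by (auto simp: bij_betw_def)
  thus ?thesis using glue_adj by (auto simp: aut_fix_def aut_def glue_def)
qed

end

lemma aut_root_of_branch_data:
  assumes \<sigma>: "bij_betw \<sigma> J J" "\<And>j. j \<in> J \<Longrightarrow> cls (\<sigma> j) = cls j"
    and \<tau>: "\<And>j. j \<in> J \<Longrightarrow> \<tau> j \<in> model_aut (cls j)"
  shows "\<exists>\<pi>\<in>aut_root. \<forall>j\<in>J. \<forall>x\<in>GV (cls j). \<pi> (branch_emb j x) = branch_emb (\<sigma> j) (\<tau> j x)"
proof
  define p where "p j = branch_emb (\<sigma> j) \<circ> \<tau> j \<circ> model_iso j" for j
  have \<sigma>J: "\<sigma> j \<in> J" if "j \<in> J" for j using \<sigma>(1) that bij_betwE by blast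
  have p_iso: "graph_iso (HV j) (HE j) (HV (\<sigma> j)) (HE (\<sigma> j)) (p j)" if "j \<in> J" for j
  proof -
    have "graph_iso (GV (cls j)) (GE (cls j)) (GV (cls j)) (GE (cls j)) (\<tau> j)"
      using \<tau>[OF that] by (simp add: aut_fix_def aut_iff_graph_iso)
    thus ?thesis
      using model_iso(1)[OF that] branch_emb_iso[OF \<sigma>J[OF that]] \<sigma>(2)[OF that]
      unfolding p_def by (metis graph_iso_comp)
  qed
  have p_root: "p j a = a" if "j \<in> J" for j
    using that model_iso(2) \<tau> branch_emb_root[OF \<sigma>J] \<sigma>(2) by (simp add: p_def aut_fix_def)
  show "glue p \<in> aut_root"
    using glue_in_aut_root[OF \<sigma>(1) p_iso p_root] .
  show "\<forall>j\<in>J. \<forall>x\<in>GV (cls j). glue p (branch_emb j x) = branch_emb (\<sigma> j) (\<tau> j x)"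
  proof (intro ballI)
    fix j x assume "j \<in> J" "x \<in> GV (cls j)"
    hence "glue p (branch_emb j x) = p j (branch_emb j x)"
      using glue_eq[OF \<sigma>(1) p_iso p_root] branch_emb_mem by blast
    also have "\<dots> = branch_emb (\<sigma> j) (\<tau> j x)"
      using \<open>j \<in> J\<close> \<open>x \<in> GV (cls j)\<close> model_iso_branch_emb by (simp add: p_def)
    finally show "glue p (branch_emb j x) = branch_emb (\<sigma> j) (\<tau> j x)" .
  qed
qed

definition reachable_off_root :: "'a \<Rightarrow> 'a \<Rightarrow> bool" where
  "reachable_off_root = (\<lambda>u v. u \<in> V - {a} \<and> v \<in> V - {a} \<and> E u v)\<^sup>*\<^sup>*"

lemma reachable_off_root_stays_in_branch:
  assumes "reachable_off_root u v" "j \<in> J" "u \<in> HV j - {a}"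
  shows "v \<in> HV j - {a}"
  using assms(1,3) unfolding reachable_off_root_def
proof (induction rule: rtranclp_induct)
  case (step y z)
  have y: "y \<in> HV j" "y \<noteq> a" and z: "z \<noteq> a" and "E y z" using step by auto
  then obtain l where l: "l \<in> J" "HE l y z" using edge_in_branch by blast
  have "l = j" using branch_unique[OF l(1) assms(2) _ y] branch_edge_mem[OF l] by blast
  thus ?case using branch_edge_mem[OF l] z by blast
qed simp

lemma reachable_off_root_within_branch:
  assumes "j \<in> J" "u \<in> HV j - {a}" "v \<in> HV j - {a}"
  shows "reachable_off_root u v"
proof -
  have "(\<lambda>x y. x \<in> HV j - {a} \<and> y \<in> HV j - {a} \<and> x \<noteq> a \<and> y \<noteq> a \<and> HE j x y)\<^sup>*\<^sup>* u v"
    using branch_minus_root_connected[OF assms(1)] assms(2,3) unfolding connected_graph_def by blast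
  thus ?thesis unfolding reachable_off_root_def
  proof (rule mono_rtranclp[rule_format, rotated])
    fix x y assume "x \<in> HV j - {a} \<and> y \<in> HV j - {a} \<and> x \<noteq> a \<and> y \<noteq> a \<and> HE j x y"
    thus "x \<in> V - {a} \<and> y \<in> V - {a} \<and> E x y"
      using branch_subset[OF assms(1)] branch_edge[OF assms(1)] by blast
  qed
qed

lemma aut_root_reachable_off_root:
  assumes "\<pi> \<in> aut_root" "reachable_off_root u v"
  shows "reachable_off_root (\<pi> u) (\<pi> v)"
  using assms(2) unfolding reachable_off_root_def
proof (induction rule: rtranclp_induct)
  case (step y z)
  have "\<pi> \<in> aut V E" using assms(1) by (simp add: aut_fix_def)
  hence "\<pi> y \<in> V - {a} \<and> \<pi> z \<in> V - {a} \<and> E (\<pi> y) (\<pi> z)"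
    using step.hyps(2) aut_mem[of \<pi> V E] aut_adj[of \<pi> V E] aut_fix_neq_root[OF assms(1)] by auto
  with step.IH show ?case by (rule rtranclp.rtrancl_into_rtrancl)
qed simp

lemma aut_root_maps_branch_into:
  assumes "\<pi> \<in> aut_root" "j \<in> J" "l \<in> J" "w \<in> HV j - {a}" "\<pi> w \<in> HV l"
  shows "\<pi> ` (HV j - {a}) \<subseteq> HV l - {a}"
proof
  fix y assume "y \<in> \<pi> ` (HV j - {a})"
  then obtain x where "x \<in> HV j - {a}" "y = \<pi> x" by blast
  moreover have "\<pi> w \<noteq> a" using aut_fix_neq_root[OF assms(1)] assms(4) by blast
  ultimately show "y \<in> HV l - {a}"
    using aut_root_reachable_off_root[OF assms(1) reachable_off_root_within_branch[OF assms(2,4)]]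
      reachable_off_root_stays_in_branch assms(3,5) by blast
qed

text \<open>The branches minus the root are the components of \<open>G - a\<close>, so an automorphism fixing
  the root permutes them.\<close>

lemma aut_root_image_branch:
  assumes \<pi>: "\<pi> \<in> aut_root" and j: "j \<in> J"
  shows "\<exists>l\<in>J. \<pi> ` HV j = HV l"
proof -
  have bij: "bij \<pi>" and \<pi>a: "\<pi> a = a" using \<pi> aut_imp_bij by (auto simp: aut_fix_def)
  obtain w where w: "w \<in> HV j - {a}" using branch_has_nonroot[OF j] by blast
  have \<pi>w: "\<pi> w \<in> V - {a}"
    using w j branch_subset aut_mem[of \<pi> V E] aut_fix_neq_root[OF \<pi>] \<pi> by (auto simp: aut_fix_def)
  then obtain l where l: "l \<in> J" "\<pi> w \<in> HV l" using branch_mem by blast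
  have "\<pi> ` (HV j - {a}) \<subseteq> HV l - {a}"
    using aut_root_maps_branch_into[OF \<pi> j l(1) w l(2)] .
  moreover have "HV l - {a} \<subseteq> \<pi> ` (HV j - {a})"
  proof
    have "inv \<pi> (\<pi> w) \<in> HV j" using w bij by (simp add: bij_is_inj)
    hence inv_into: "inv \<pi> ` (HV l - {a}) \<subseteq> HV j - {a}"
      using aut_root_maps_branch_into[OF inv_in_aut_fix[OF \<pi>] l(1) j] l(2) \<pi>w by blast
    fix y assume "y \<in> HV l - {a}"
    hence "inv \<pi> y \<in> HV j - {a}" using inv_into by blast
    moreover have "y = \<pi> (inv \<pi> y)" using bij by (simp add: bij_is_surj surj_f_inv_f)
    ultimately show "y \<in> \<pi> ` (HV j - {a})" by blast
  qed
  ultimately have "\<pi> ` (HV j - {a}) = HV l - {a}" by blast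
  hence "\<pi> ` HV j = HV l"
    using \<pi>a root_in_branch[OF j] root_in_branch[OF l(1)] by (metis image_insert insert_Diff)
  thus ?thesis using l(1) by blast
qed

lemma aut_root_branch_iso:
  assumes \<pi>: "\<pi> \<in> aut_root" and j: "j \<in> J" and l: "l \<in> J" and image: "\<pi> ` HV j = HV l"
  shows "graph_iso (HV j) (HE j) (HV l) (HE l) \<pi>"
proof -
  have \<pi>_aut: "\<pi> \<in> aut V E" using \<pi> by (simp add: aut_fix_def)
  have "HE j x y \<longleftrightarrow> HE l (\<pi> x) (\<pi> y)" if "x \<in> HV j" "y \<in> HV j" for x y
  proof -
    have "HE j x y \<longleftrightarrow> E x y" using E_iff_branch_edge[OF j that] by simp
    also have "\<dots> \<longleftrightarrow> E (\<pi> x) (\<pi> y)" using aut_adj[OF \<pi>_aut] that branch_subset[OF j] by blast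
    also have "\<dots> \<longleftrightarrow> HE l (\<pi> x) (\<pi> y)" using E_iff_branch_edge[OF l] image that by blast
    finally show ?thesis .
  qed
  moreover have "inj_on \<pi> (HV j)"
    using aut_imp_bij[OF \<pi>_aut] by (meson bij_is_inj inj_on_subset subset_UNIV)
  ultimately show ?thesis using image by (simp add: graph_iso_def bij_betw_def)
qed

lemma aut_root_branch_data:
  assumes \<pi>: "\<pi> \<in> aut_root" and j: "j \<in> J"
  shows "\<exists>l\<in>J. cls l = cls j \<and>
    (\<exists>t\<in>model_aut (cls j). \<forall>x\<in>GV (cls j). \<pi> (branch_emb j x) = branch_emb l (t x))"
proof -
  have \<pi>a: "\<pi> a = a" using \<pi> by (simp add: aut_fix_def)
  obtain l where l: "l \<in> J" "\<pi> ` HV j = HV l" using aut_root_image_branch[OF \<pi> j] by blast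
  have \<pi>_iso: "graph_iso (HV j) (HE j) (HV l) (HE l) \<pi>"
    using aut_root_branch_iso[OF \<pi> j l] .
  hence "cls l = cls j"
    using cls_eq_if_rooted_iso[OF j l(1)] \<pi>a unfolding rooted_iso_iff_graph_iso by metis
  define t where "t x = (if x \<in> GV (cls j) then model_iso l (\<pi> (branch_emb j x)) else x)" for x
  have "graph_iso (GV (cls j)) (GE (cls j)) (GV (cls j)) (GE (cls j))
      (model_iso l \<circ> \<pi> \<circ> branch_emb j)"
    using graph_iso_comp[OF graph_iso_comp[OF branch_emb_iso[OF j] \<pi>_iso] model_iso(1)[OF l(1)]]
      \<open>cls l = cls j\<close> by (simp add: comp_assoc)
  hence "graph_iso (GV (cls j)) (GE (cls j)) (GV (cls j)) (GE (cls j)) t"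
    using graph_iso_cong[of "GV (cls j)" t "model_iso l \<circ> \<pi> \<circ> branch_emb j"] by (simp add: t_def)
  moreover have "t (r (cls j)) = r (cls j)"
    using model_root_mem[OF cls_mem[OF j]] branch_emb_root[OF j] \<pi>a model_iso(2)[OF l(1)]
      \<open>cls l = cls j\<close> by (simp add: t_def)
  ultimately have "t \<in> model_aut (cls j)" by (simp add: aut_fix_def aut_iff_graph_iso t_def)
  moreover have "\<pi> (branch_emb j x) = branch_emb l (t x)" if "x \<in> GV (cls j)" for x
  proof -
    have "\<pi> (branch_emb j x) \<in> HV l" using l(2) branch_emb_mem[OF j that] by blast
    thus ?thesis using that branch_emb_model_iso[OF l(1)] by (simp add: t_def)
  qed
  ultimately show ?thesis using l(1) \<open>cls l = cls j\<close> by blast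
qed

lemma aut_root_decompose:
  assumes "\<pi> \<in> aut_root"
  obtains \<sigma> \<tau> where "\<And>j. j \<in> J \<Longrightarrow> \<sigma> j \<in> J \<and> cls (\<sigma> j) = cls j \<and> \<tau> j \<in> model_aut (cls j) \<and>
    (\<forall>x\<in>GV (cls j). \<pi> (branch_emb j x) = branch_emb (\<sigma> j) (\<tau> j x))"
proof -
  have "\<forall>j\<in>J. \<exists>l. l \<in> J \<and> cls l = cls j \<and>
      (\<exists>t\<in>model_aut (cls j). \<forall>x\<in>GV (cls j). \<pi> (branch_emb j x) = branch_emb l (t x))"
    using aut_root_branch_data[OF assms] by blast
  from bchoice[OF this] obtain \<sigma> where \<sigma>: "\<forall>j\<in>J. \<sigma> j \<in> J \<and> cls (\<sigma> j) = cls j \<and>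
      (\<exists>t\<in>model_aut (cls j). \<forall>x\<in>GV (cls j). \<pi> (branch_emb j x) = branch_emb (\<sigma> j) (t x))" ..
  hence "\<forall>j\<in>J. \<exists>t. t \<in> model_aut (cls j) \<and>
      (\<forall>x\<in>GV (cls j). \<pi> (branch_emb j x) = branch_emb (\<sigma> j) (t x))" by blast
  from bchoice[OF this] obtain \<tau> where "\<forall>j\<in>J. \<tau> j \<in> model_aut (cls j) \<and>
      (\<forall>x\<in>GV (cls j). \<pi> (branch_emb j x) = branch_emb (\<sigma> j) (\<tau> j x))" ..
  with \<sigma> show ?thesis using that by blast
qed

section \<open>Labelings of the branches\<close>

abbreviation "root_labelings k \<equiv> dist_labelings V aut_root k"
abbreviation "model_labelings i k \<equiv> dist_labelings (GV i) (model_aut i) k"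
abbreviation "model_equiv i \<equiv> lab_equiv (GV i) (model_aut i)"

definition branch_labeling :: "('a \<Rightarrow> nat) \<Rightarrow> 'j \<Rightarrow> 'b \<Rightarrow> nat" where
  "branch_labeling \<phi> j = restrict (\<phi> \<circ> branch_emb j) (GV (cls j))"

lemma branch_labeling_apply: "x \<in> GV (cls j) \<Longrightarrow> branch_labeling \<phi> j x = \<phi> (branch_emb j x)"
  by (simp add: branch_labeling_def)

lemma branch_labeling_root: "j \<in> J \<Longrightarrow> branch_labeling \<phi> j (r (cls j)) = \<phi> a"
  using model_root_mem[OF cls_mem] branch_emb_root by (simp add: branch_labeling_apply)

lemma branch_labeling_PiE:
  assumes "\<phi> \<in> V \<rightarrow>\<^sub>E {1..k}" "j \<in> J"
  shows "branch_labeling \<phi> j \<in> GV (cls j) \<rightarrow>\<^sub>E {1..k}"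
  using assms branch_emb_mem branch_subset by (fastforce simp: branch_labeling_def)

lemma model_aut_mem: "\<tau> \<in> model_aut i \<Longrightarrow> x \<in> GV i \<Longrightarrow> \<tau> x \<in> GV i"
  by (auto simp: aut_fix_def intro: aut_mem)

lemma compose_eq_iff_branchwise:
  assumes \<sigma>: "\<And>j. j \<in> J \<Longrightarrow> \<sigma> j \<in> J \<and> cls (\<sigma> j) = cls j \<and> \<tau> j \<in> model_aut (cls j)"
    and \<pi>: "\<forall>j\<in>J. \<forall>x\<in>GV (cls j). \<pi> (branch_emb j x) = branch_emb (\<sigma> j) (\<tau> j x)"
  shows "(\<forall>v\<in>V. \<psi> (\<pi> v) = \<phi> v) \<longleftrightarrow>
    (\<forall>j\<in>J. \<forall>x\<in>GV (cls j). branch_labeling \<psi> (\<sigma> j) (\<tau> j x) = branch_labeling \<phi> j x)"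
proof -
  have "branch_labeling \<psi> (\<sigma> j) (\<tau> j x) = \<psi> (\<pi> (branch_emb j x))"
    if "j \<in> J" "x \<in> GV (cls j)" for j x
    using that \<sigma> \<pi> model_aut_mem by (simp add: branch_labeling_apply)
  hence "(\<forall>j\<in>J. \<forall>x\<in>GV (cls j). branch_labeling \<psi> (\<sigma> j) (\<tau> j x) = branch_labeling \<phi> j x)
      \<longleftrightarrow> (\<forall>j\<in>J. \<forall>x\<in>GV (cls j). \<psi> (\<pi> (branch_emb j x)) = \<phi> (branch_emb j x))"
    by (simp add: branch_labeling_apply)
  also have "\<dots> \<longleftrightarrow> (\<forall>v\<in>V. \<psi> (\<pi> v) = \<phi> v)"
    using branch_emb_cover branch_emb_mem branch_subset by blast
  finally show ?thesis ..
qed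

lemma lab_equiv_of_branchwise:
  assumes \<sigma>: "bij_betw \<sigma> J J" "\<And>j. j \<in> J \<Longrightarrow> cls (\<sigma> j) = cls j"
    and \<tau>: "\<And>j. j \<in> J \<Longrightarrow> \<tau> j \<in> model_aut (cls j)"
    and eq: "\<forall>j\<in>J. \<forall>x\<in>GV (cls j). branch_labeling \<psi> (\<sigma> j) (\<tau> j x) = branch_labeling \<phi> j x"
  obtains \<pi> where "\<pi> \<in> aut_root" "\<forall>v\<in>V. \<psi> (\<pi> v) = \<phi> v"
    and "\<forall>j\<in>J. \<forall>x\<in>GV (cls j). \<pi> (branch_emb j x) = branch_emb (\<sigma> j) (\<tau> j x)"
proof -
  obtain \<pi> where \<pi>: "\<pi> \<in> aut_root"
    and rel: "\<forall>j\<in>J. \<forall>x\<in>GV (cls j). \<pi> (branch_emb j x) = branch_emb (\<sigma> j) (\<tau> j x)"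
    using aut_root_of_branch_data[OF \<sigma> \<tau>] by blast
  have "\<sigma> j \<in> J" if "j \<in> J" for j using \<sigma>(1) that bij_betwE by blast
  hence "\<forall>v\<in>V. \<psi> (\<pi> v) = \<phi> v"
    using compose_eq_iff_branchwise[OF _ rel] \<sigma>(2) \<tau> eq by blast
  with \<pi> rel that show ?thesis by blast
qed

lemma aut_root_eq_id:
  assumes "\<pi> \<in> aut_root" "\<forall>j\<in>J. \<forall>x\<in>GV (cls j). \<pi> (branch_emb j x) = branch_emb j x"
  shows "\<pi> = id"
proof
  fix v show "\<pi> v = id v"
    using assms branch_emb_cover[of v] by (cases "v \<in> V") (auto simp: aut_fix_def aut_def)
qed

lemma model_aut_eq_id:
  assumes "j \<in> J" "\<tau> \<in> model_aut (cls j)"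
    and "\<forall>x\<in>GV (cls j). branch_emb j (\<tau> x) = branch_emb j x"
  shows "\<tau> = id"
proof
  fix x show "\<tau> x = id x"
  proof (cases "x \<in> GV (cls j)")
    case True
    thus ?thesis
      using assms graph_iso_inj[OF branch_emb_iso] model_aut_mem by (metis id_apply)
  qed (use assms(2) in \<open>auto simp: aut_fix_def aut_def\<close>)
qed

lemma branch_labeling_dist:
  assumes \<phi>: "\<phi> \<in> root_labelings k" and j: "j \<in> J"
  shows "branch_labeling \<phi> j \<in> model_labelings (cls j) k"
proof -
  have "\<tau> = id" if \<tau>: "\<tau> \<in> model_aut (cls j)"
    and preserved: "\<forall>x\<in>GV (cls j). branch_labeling \<phi> j (\<tau> x) = branch_labeling \<phi> j x" for \<tau>
  proof -
    define \<tau>' where "\<tau>' l = (if l = j then \<tau> else id)" for l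
    have "bij_betw id J J" by simp
    moreover have "cls (id l) = cls l" if "l \<in> J" for l by simp
    moreover have "\<tau>' l \<in> model_aut (cls l)" if "l \<in> J" for l
      using \<tau> by (simp add: \<tau>'_def id_in_aut_fix)
    moreover have "\<forall>l\<in>J. \<forall>x\<in>GV (cls l). branch_labeling \<phi> (id l) (\<tau>' l x) = branch_labeling \<phi> l x"
      using preserved by (simp add: \<tau>'_def)
    ultimately obtain \<pi> where \<pi>: "\<pi> \<in> aut_root" "\<forall>v\<in>V. \<phi> (\<pi> v) = \<phi> v"
      and rel: "\<forall>l\<in>J. \<forall>x\<in>GV (cls l). \<pi> (branch_emb l x) = branch_emb (id l) (\<tau>' l x)"
      by (rule lab_equiv_of_branchwise)
    have "\<pi> = id" using \<phi> \<pi> by (simp add: dist_labelings_def)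
    hence "\<forall>x\<in>GV (cls j). branch_emb j (\<tau> x) = branch_emb j x" using rel j by (simp add: \<tau>'_def)
    thus "\<tau> = id" using model_aut_eq_id[OF j \<tau>] by blast
  qed
  moreover have "branch_labeling \<phi> j \<in> GV (cls j) \<rightarrow>\<^sub>E {1..k}"
    using \<phi> j branch_labeling_PiE by (simp add: dist_labelings_def)
  ultimately show ?thesis by (auto simp: dist_labelings_def)
qed

lemma swap_branches_aut_root:
  assumes j: "j \<in> J" and l: "l \<in> J" and "j \<noteq> l" and same_cls: "cls j = cls l"
    and \<tau>: "\<tau> \<in> model_aut (cls j)"
    and \<tau>_eq: "\<forall>x\<in>GV (cls j). branch_labeling \<phi> l (\<tau> x) = branch_labeling \<phi> j x"
  obtains \<pi> where "\<pi> \<in> aut_root" "\<forall>v\<in>V. \<phi> (\<pi> v) = \<phi> v"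
    "\<forall>x\<in>GV (cls j). \<pi> (branch_emb j x) = branch_emb l (\<tau> x)"
proof -
  have bij: "bij \<tau>" using \<tau> aut_imp_bij by (auto simp: aut_fix_def)
  define \<sigma> where "\<sigma> = id(j := l, l := j)"
  define \<tau>' where "\<tau>' n = (if n = j then \<tau> else if n = l then inv \<tau> else id)" for n
  have "bij_betw \<sigma> J J"
    by (rule bij_betw_byWitness[where f' = \<sigma>]) (use j l in \<open>auto simp: \<sigma>_def\<close>)
  moreover have "cls (\<sigma> n) = cls n" for n using same_cls by (simp add: \<sigma>_def)
  moreover have "\<tau>' n \<in> model_aut (cls n)" for n
    using \<tau> inv_in_aut_fix[OF \<tau>] same_cls by (simp add: \<tau>'_def id_in_aut_fix)
  moreover have "branch_labeling \<phi> (\<sigma> n) (\<tau>' n x) = branch_labeling \<phi> n x"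
    if "x \<in> GV (cls n)" for n x
  proof -
    have "branch_labeling \<phi> j (inv \<tau> x) = branch_labeling \<phi> l x" if "x \<in> GV (cls j)"
      using \<tau>_eq model_aut_mem[OF inv_in_aut_fix[OF \<tau>] that] surj_f_inv_f[OF bij_is_surj[OF bij]]
      by metis
    thus ?thesis using that \<tau>_eq same_cls \<open>j \<noteq> l\<close> by (auto simp: \<sigma>_def \<tau>'_def)
  qed
  ultimately obtain \<pi> where "\<pi> \<in> aut_root" "\<forall>v\<in>V. \<phi> (\<pi> v) = \<phi> v"
    and "\<forall>n\<in>J. \<forall>x\<in>GV (cls n). \<pi> (branch_emb n x) = branch_emb (\<sigma> n) (\<tau>' n x)"
    using lab_equiv_of_branchwise by blast
  with j that show ?thesis by (simp add: \<sigma>_def \<tau>'_def)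
qed

lemma branch_labelings_inequiv:
  assumes \<phi>: "\<phi> \<in> root_labelings k" and j: "j \<in> J" and l: "l \<in> J"
    and "j \<noteq> l" and same_cls: "cls j = cls l"
  shows "\<not> model_equiv (cls j) (branch_labeling \<phi> j) (branch_labeling \<phi> l)"
proof
  assume "model_equiv (cls j) (branch_labeling \<phi> j) (branch_labeling \<phi> l)"
  then obtain \<tau> where \<tau>: "\<tau> \<in> model_aut (cls j)"
    and "\<forall>x\<in>GV (cls j). branch_labeling \<phi> l (\<tau> x) = branch_labeling \<phi> j x"
    by (auto simp: lab_equiv_def)
  then obtain \<pi> where \<pi>: "\<pi> \<in> aut_root" "\<forall>v\<in>V. \<phi> (\<pi> v) = \<phi> v"
    and swap: "\<forall>x\<in>GV (cls j). \<pi> (branch_emb j x) = branch_emb l (\<tau> x)"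
    using swap_branches_aut_root[OF j l \<open>j \<noteq> l\<close> same_cls] by blast
  have "\<pi> = id" using \<phi> \<pi> by (simp add: dist_labelings_def)
  obtain w where w: "w \<in> HV j" "w \<noteq> a" using branch_has_nonroot[OF j] by blast
  have "w = branch_emb l (\<tau> (model_iso j w))"
    using swap model_iso_mem[OF j w(1)] branch_emb_model_iso[OF j w(1)] \<open>\<pi> = id\<close> by auto
  hence "w \<in> HV l"
    using branch_emb_mem[OF l] model_aut_mem[OF \<tau> model_iso_mem[OF j w(1)]] same_cls by metis
  thus False using branch_unique[OF j l w(1)] w(2) \<open>j \<noteq> l\<close> by blast
qed

lemma dist_labeling_if_branchwise:
  assumes \<phi>: "\<phi> \<in> V \<rightarrow>\<^sub>E {1..k}"
    and dist: "\<And>j. j \<in> J \<Longrightarrow> branch_labeling \<phi> j \<in> model_labelings (cls j) k"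
    and inequiv: "\<And>j l. j \<in> J \<Longrightarrow> l \<in> J \<Longrightarrow> j \<noteq> l \<Longrightarrow> cls j = cls l \<Longrightarrow>
      \<not> model_equiv (cls j) (branch_labeling \<phi> j) (branch_labeling \<phi> l)"
  shows "\<phi> \<in> root_labelings k"
proof -
  have "\<pi> = id" if \<pi>: "\<pi> \<in> aut_root" and preserved: "\<forall>v\<in>V. \<phi> (\<pi> v) = \<phi> v" for \<pi>
  proof -
    obtain \<sigma> \<tau> where \<sigma>\<tau>: "\<And>j. j \<in> J \<Longrightarrow> \<sigma> j \<in> J \<and> cls (\<sigma> j) = cls j \<and> \<tau> j \<in> model_aut (cls j)"
      and rel: "\<forall>j\<in>J. \<forall>x\<in>GV (cls j). \<pi> (branch_emb j x) = branch_emb (\<sigma> j) (\<tau> j x)"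
      using aut_root_decompose[OF \<pi>] by metis
    have eq: "\<forall>x\<in>GV (cls j). branch_labeling \<phi> (\<sigma> j) (\<tau> j x) = branch_labeling \<phi> j x"
      if "j \<in> J" for j
      using compose_eq_iff_branchwise[OF \<sigma>\<tau> rel] preserved that by blast
    have \<sigma>_id: "\<sigma> j = j" if "j \<in> J" for j
      using inequiv[OF that] \<sigma>\<tau>[OF that] eq[OF that] unfolding lab_equiv_def by metis
    have "\<tau> j = id" if "j \<in> J" for j
    proof -
      have "\<forall>x\<in>GV (cls j). branch_labeling \<phi> j (\<tau> j x) = branch_labeling \<phi> j x"
        using eq[OF that] \<sigma>_id[OF that] by simp
      thus ?thesis using dist[OF that] \<sigma>\<tau>[OF that] unfolding dist_labelings_def by blast
    qed
    thus "\<pi> = id" using aut_root_eq_id[OF \<pi>] rel \<sigma>_id by simp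
  qed
  with \<phi> show ?thesis by (simp add: dist_labelings_def)
qed

section \<open>Counting the classes\<close>

abbreviation "model_class i k \<equiv> lab_class (GV i) (model_aut i) k"

definition branch_classes :: "('a \<Rightarrow> nat) \<Rightarrow> nat \<Rightarrow> 'i \<Rightarrow> ('b \<Rightarrow> nat) set set" where
  "branch_classes \<phi> k i = (\<lambda>j. model_class i k (branch_labeling \<phi> j)) ` {j \<in> J. cls j = i}"

definition signature :: "('a \<Rightarrow> nat) \<Rightarrow> nat \<Rightarrow> nat \<times> ('i \<Rightarrow> ('b \<Rightarrow> nat) set set)" where
  "signature \<phi> k = (\<phi> a, \<lambda>i\<in>I. branch_classes \<phi> k i)"

definition signatures :: "nat \<Rightarrow> (nat \<times> ('i \<Rightarrow> ('b \<Rightarrow> nat) set set)) set" where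
  "signatures k = (SIGMA c:{1..k}. PiE I (\<lambda>i.
     {X. X \<subseteq> model_class i k ` dist_labelings_root (GV i) (GE i) (r i) k c
         \<and> card X = card {j \<in> J. cls j = i}}))"

lemma branch_class_eq_iff:
  assumes "\<phi> \<in> root_labelings k" "\<psi> \<in> root_labelings k" "j \<in> J" "l \<in> J" "cls l = cls j"
  shows "model_class (cls j) k (branch_labeling \<phi> j) = model_class (cls j) k (branch_labeling \<psi> l)
    \<longleftrightarrow> model_equiv (cls j) (branch_labeling \<phi> j) (branch_labeling \<psi> l)"
  using lab_class_eq_iff branch_labeling_dist assms by metis

lemma signature_mem:
  assumes \<phi>: "\<phi> \<in> root_labelings k"
  shows "signature \<phi> k \<in> signatures k"
proof -
  have "branch_classes \<phi> k i \<subseteq> model_class i k ` dist_labelings_root (GV i) (GE i) (r i) k (\<phi> a)"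
    for i
    using branch_labeling_dist[OF \<phi>] branch_labeling_root
    by (auto simp: branch_classes_def dist_labelings_root_def)
  moreover have "inj_on (\<lambda>j. model_class i k (branch_labeling \<phi> j)) {j \<in> J. cls j = i}" for i
    using branch_class_eq_iff[OF \<phi> \<phi>] branch_labelings_inequiv[OF \<phi>] by (fastforce simp: inj_on_def)
  hence "card (branch_classes \<phi> k i) = card {j \<in> J. cls j = i}" for i
    by (simp add: branch_classes_def card_image)
  moreover have "\<phi> a \<in> {1..k}"
    using \<phi> root_in_V by (auto simp: dist_labelings_def)
  ultimately show ?thesis by (simp add: signature_def signatures_def)
qed

lemma branch_classes_subset_if_lab_equiv:
  assumes \<phi>: "\<phi> \<in> root_labelings k" and \<psi>: "\<psi> \<in> root_labelings k"
    and "lab_equiv V aut_root \<phi> \<psi>"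
  shows "branch_classes \<phi> k i \<subseteq> branch_classes \<psi> k i"
proof -
  obtain \<pi> where \<pi>: "\<pi> \<in> aut_root" and \<psi>\<phi>: "\<forall>v\<in>V. \<psi> (\<pi> v) = \<phi> v"
    using assms(3) by (auto simp: lab_equiv_def)
  obtain \<sigma> \<tau> where \<sigma>\<tau>: "\<And>j. j \<in> J \<Longrightarrow> \<sigma> j \<in> J \<and> cls (\<sigma> j) = cls j \<and> \<tau> j \<in> model_aut (cls j)"
    and rel: "\<forall>j\<in>J. \<forall>x\<in>GV (cls j). \<pi> (branch_emb j x) = branch_emb (\<sigma> j) (\<tau> j x)"
    using aut_root_decompose[OF \<pi>] by metis
  have "model_equiv (cls j) (branch_labeling \<phi> j) (branch_labeling \<psi> (\<sigma> j))" if "j \<in> J" for j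
    using compose_eq_iff_branchwise[OF \<sigma>\<tau> rel] \<psi>\<phi> \<sigma>\<tau>[OF that] that
    unfolding lab_equiv_def by blast
  hence "model_class (cls j) k (branch_labeling \<phi> j)
      = model_class (cls j) k (branch_labeling \<psi> (\<sigma> j))" if "j \<in> J" for j
    using branch_class_eq_iff[OF \<phi> \<psi> that] \<sigma>\<tau> that by blast
  thus ?thesis using \<sigma>\<tau> unfolding branch_classes_def by (force intro: image_eqI)
qed

lemma signature_eq_if_lab_equiv:
  assumes "\<phi> \<in> root_labelings k" "\<psi> \<in> root_labelings k" "lab_equiv V aut_root \<phi> \<psi>"
  shows "signature \<phi> k = signature \<psi> k"
proof -
  have "branch_classes \<phi> k i = branch_classes \<psi> k i" for i
    using branch_classes_subset_if_lab_equiv assms lab_equiv_sym by (metis subset_antisym)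
  thus ?thesis using lab_equiv_root[OF assms(3) root_in_V] by (simp add: signature_def)
qed

lemma branch_matching:
  assumes \<phi>: "\<phi> \<in> root_labelings k" and \<psi>: "\<psi> \<in> root_labelings k"
    and same: "\<And>i. i \<in> I \<Longrightarrow> branch_classes \<phi> k i = branch_classes \<psi> k i"
  obtains \<sigma> \<tau> where "bij_betw \<sigma> J J" "\<And>j. j \<in> J \<Longrightarrow> cls (\<sigma> j) = cls j"
    "\<And>j. j \<in> J \<Longrightarrow> \<tau> j \<in> model_aut (cls j)"
    "\<forall>j\<in>J. \<forall>x\<in>GV (cls j). branch_labeling \<psi> (\<sigma> j) (\<tau> j x) = branch_labeling \<phi> j x"
proof -
  have "\<exists>l\<in>J. cls l = cls j \<and> model_equiv (cls j) (branch_labeling \<phi> j) (branch_labeling \<psi> l)"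
    if j: "j \<in> J" for j
  proof -
    have "model_class (cls j) k (branch_labeling \<phi> j) \<in> branch_classes \<psi> k (cls j)"
      using same[OF cls_mem[OF j]] j by (auto simp: branch_classes_def)
    then obtain l where "l \<in> J" "cls l = cls j"
      "model_class (cls j) k (branch_labeling \<phi> j) = model_class (cls j) k (branch_labeling \<psi> l)"
      by (auto simp: branch_classes_def)
    thus ?thesis using branch_class_eq_iff[OF \<phi> \<psi> j] by blast
  qed
  then obtain \<sigma> where \<sigma>: "\<And>j. j \<in> J \<Longrightarrow> \<sigma> j \<in> J \<and> cls (\<sigma> j) = cls j"
    and equiv: "\<And>j. j \<in> J \<Longrightarrow> model_equiv (cls j) (branch_labeling \<phi> j) (branch_labeling \<psi> (\<sigma> j))"
    by metis
  then obtain \<tau> where \<tau>: "\<And>j. j \<in> J \<Longrightarrow> \<tau> j \<in> model_aut (cls j) \<and>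
      (\<forall>x\<in>GV (cls j). branch_labeling \<psi> (\<sigma> j) (\<tau> j x) = branch_labeling \<phi> j x)"
    unfolding lab_equiv_def by metis
  have "inj_on \<sigma> J"
  proof
    fix j j' assume j: "j \<in> J" and j': "j' \<in> J" and eq: "\<sigma> j = \<sigma> j'"
    hence "cls j' = cls j" using \<sigma> by metis
    hence "model_equiv (cls j) (branch_labeling \<phi> j) (branch_labeling \<phi> j')"
      using equiv[OF j] equiv[OF j'] eq lab_equiv_sym lab_equiv_trans by metis
    thus "j = j'" using branch_labelings_inequiv[OF \<phi> j j'] \<open>cls j' = cls j\<close> by metis
  qed
  hence "bij_betw \<sigma> J J"
    using endo_inj_surj[OF finite_branches] \<sigma> by (auto simp: bij_betw_def)
  with \<sigma> \<tau> that show ?thesis by blast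
qed

lemma lab_equiv_if_signature_eq:
  assumes "\<phi> \<in> root_labelings k" "\<psi> \<in> root_labelings k" "signature \<phi> k = signature \<psi> k"
  shows "lab_equiv V aut_root \<phi> \<psi>"
proof -
  have "branch_classes \<phi> k i = branch_classes \<psi> k i" if "i \<in> I" for i
    using assms(3) that by (simp add: signature_def restrict_def fun_eq_iff) (metis)
  then obtain \<sigma> \<tau> where "bij_betw \<sigma> J J" "\<And>j. j \<in> J \<Longrightarrow> cls (\<sigma> j) = cls j"
    "\<And>j. j \<in> J \<Longrightarrow> \<tau> j \<in> model_aut (cls j)"
    "\<forall>j\<in>J. \<forall>x\<in>GV (cls j). branch_labeling \<psi> (\<sigma> j) (\<tau> j x) = branch_labeling \<phi> j x"
    using branch_matching[OF assms(1,2)] by metis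
  then obtain \<pi> where "\<pi> \<in> aut_root" "\<forall>v\<in>V. \<psi> (\<pi> v) = \<phi> v"
    by (rule lab_equiv_of_branchwise)
  thus ?thesis by (auto simp: lab_equiv_def)
qed

definition combine_labeling :: "nat \<Rightarrow> ('j \<Rightarrow> 'b \<Rightarrow> nat) \<Rightarrow> 'a \<Rightarrow> nat" where
  "combine_labeling c \<psi> =
    restrict (\<lambda>v. if v = a then c else \<psi> (branch v) (model_iso (branch v) v)) V"

context
  fixes c :: nat and \<psi> :: "'j \<Rightarrow> 'b \<Rightarrow> nat" and k :: nat
  assumes c: "c \<in> {1..k}"
    and \<psi>: "\<And>j. j \<in> J \<Longrightarrow> \<psi> j \<in> GV (cls j) \<rightarrow>\<^sub>E {1..k} \<and> \<psi> j (r (cls j)) = c"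
begin

lemma combine_labeling_PiE: "combine_labeling c \<psi> \<in> V \<rightarrow>\<^sub>E {1..k}"
  using c \<psi> branch_mem model_iso_mem by (fastforce simp: combine_labeling_def)

lemma branch_labeling_combine: "j \<in> J \<Longrightarrow> branch_labeling (combine_labeling c \<psi>) j = \<psi> j"
proof
  fix x assume j: "j \<in> J"
  show "branch_labeling (combine_labeling c \<psi>) j x = \<psi> j x"
  proof (cases "x \<in> GV (cls j)")
    case x: True
    have "branch_emb j x \<in> V" using branch_emb_mem[OF j x] branch_subset[OF j] by blast
    moreover have "branch_emb j x \<noteq> a \<Longrightarrow> branch (branch_emb j x) = j"
      using branch_eqI[OF j branch_emb_mem[OF j x]] by blast
    ultimately show ?thesis
      using x j \<psi> branch_emb_eq_root_iff model_iso_branch_emb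
      by (auto simp: combine_labeling_def branch_labeling_apply)
  next
    case False
    thus ?thesis using \<psi>[OF j] by (auto simp: branch_labeling_def PiE_def extensional_def)
  qed
qed

lemma combine_labeling_dist:
  assumes dist: "\<And>j. j \<in> J \<Longrightarrow> \<psi> j \<in> model_labelings (cls j) k"
    and distinct: "\<And>j l. j \<in> J \<Longrightarrow> l \<in> J \<Longrightarrow> j \<noteq> l \<Longrightarrow> cls j = cls l \<Longrightarrow>
      model_class (cls j) k (\<psi> j) \<noteq> model_class (cls j) k (\<psi> l)"
  shows "combine_labeling c \<psi> \<in> root_labelings k"
proof (rule dist_labeling_if_branchwise)
  show "combine_labeling c \<psi> \<in> V \<rightarrow>\<^sub>E {1..k}" by (rule combine_labeling_PiE)
  show "branch_labeling (combine_labeling c \<psi>) j \<in> model_labelings (cls j) k" if "j \<in> J" for j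
    using dist[OF that] branch_labeling_combine[OF that] by simp
  show "\<not> model_equiv (cls j) (branch_labeling (combine_labeling c \<psi>) j)
      (branch_labeling (combine_labeling c \<psi>) l)"
    if "j \<in> J" "l \<in> J" "j \<noteq> l" "cls j = cls l" for j l
  proof -
    have "\<psi> l \<in> model_labelings (cls j) k" using dist[OF that(2)] that(4) by simp
    hence "\<not> model_equiv (cls j) (\<psi> j) (\<psi> l)"
      using distinct[OF that] dist[OF that(1)] lab_class_eq_iff by metis
    thus ?thesis using branch_labeling_combine that(1,2) by simp
  qed
qed

end

lemma finite_model_classes:
  "i \<in> I \<Longrightarrow> finite (model_class i k ` dist_labelings_root (GV i) (GE i) (r i) k c)"
  using finite_dist_labelings[OF finite_model] by (simp add: dist_labelings_root_def)

lemma signature_representatives: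
  assumes "(c, S) \<in> signatures k"
  shows "\<exists>\<psi>. (\<forall>j\<in>J. \<psi> j \<in> dist_labelings_root (GV (cls j)) (GE (cls j)) (r (cls j)) k c)
    \<and> (\<forall>i\<in>I. bij_betw (\<lambda>j. model_class i k (\<psi> j)) {j \<in> J. cls j = i} (S i))"
proof -
  have S: "S i \<subseteq> model_class i k ` dist_labelings_root (GV i) (GE i) (r i) k c"
    "card (S i) = card {j \<in> J. cls j = i}" if "i \<in> I" for i
    using assms that by (auto simp: signatures_def)
  have "\<exists>b. bij_betw b {j \<in> J. cls j = i} (S i)" if "i \<in> I" for i
    using finite_same_card_bij[of "{j \<in> J. cls j = i}" "S i"] S[OF that] finite_branches
      finite_subset[OF S(1)[OF that] finite_model_classes[OF that]] by simp
  then obtain b where b: "\<And>i. i \<in> I \<Longrightarrow> bij_betw (b i) {j \<in> J. cls j = i} (S i)" by metis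
  have "\<exists>\<psi>\<in>dist_labelings_root (GV (cls j)) (GE (cls j)) (r (cls j)) k c.
      b (cls j) j = model_class (cls j) k \<psi>" if "j \<in> J" for j
    using bij_betwE[OF b[OF cls_mem[OF that]]] S(1)[OF cls_mem[OF that]] that by blast
  then obtain \<psi> where \<psi>: "\<And>j. j \<in> J \<Longrightarrow>
      \<psi> j \<in> dist_labelings_root (GV (cls j)) (GE (cls j)) (r (cls j)) k c \<and>
      b (cls j) j = model_class (cls j) k (\<psi> j)" by metis
  have "bij_betw (\<lambda>j. model_class i k (\<psi> j)) {j \<in> J. cls j = i} (S i)" if "i \<in> I" for i
  proof -
    have "bij_betw (\<lambda>j. model_class i k (\<psi> j)) {j \<in> J. cls j = i} (S i)
        \<longleftrightarrow> bij_betw (b i) {j \<in> J. cls j = i} (S i)"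
      using \<psi> by (intro bij_betw_cong) auto
    thus ?thesis using b[OF that] by blast
  qed
  with \<psi> show ?thesis by blast
qed

lemma signature_surj:
  assumes "(c, S) \<in> signatures k"
  shows "(c, S) \<in> (\<lambda>\<phi>. signature \<phi> k) ` root_labelings k"
proof -
  have c: "c \<in> {1..k}" and S_ext: "S \<in> extensional I"
    using assms by (auto simp: signatures_def PiE_def)
  obtain \<psi> where
    \<psi>: "\<And>j. j \<in> J \<Longrightarrow> \<psi> j \<in> dist_labelings_root (GV (cls j)) (GE (cls j)) (r (cls j)) k c"
    and bij: "\<And>i. i \<in> I \<Longrightarrow> bij_betw (\<lambda>j. model_class i k (\<psi> j)) {j \<in> J. cls j = i} (S i)"
    using signature_representatives[OF assms] by blast
  have \<psi>_PiE: "\<psi> j \<in> GV (cls j) \<rightarrow>\<^sub>E {1..k} \<and> \<psi> j (r (cls j)) = c" if "j \<in> J" for j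
    using \<psi>[OF that] by (simp add: dist_labelings_root_def dist_labelings_def)
  define \<phi> where "\<phi> = combine_labeling c \<psi>"
  have bl: "branch_labeling \<phi> j = \<psi> j" if "j \<in> J" for j
    unfolding \<phi>_def using branch_labeling_combine[OF c \<psi>_PiE that] .
  have "\<phi> \<in> root_labelings k"
    unfolding \<phi>_def
  proof (rule combine_labeling_dist[OF c \<psi>_PiE])
    show "\<psi> j \<in> model_labelings (cls j) k" if "j \<in> J" for j
      using \<psi>[OF that] by (simp add: dist_labelings_root_def)
    show "model_class (cls j) k (\<psi> j) \<noteq> model_class (cls j) k (\<psi> l)"
      if "j \<in> J" "l \<in> J" "j \<noteq> l" "cls j = cls l" for j l
      using inj_onD[OF bij_betw_imp_inj_on[OF bij[OF cls_mem[OF that(1)]]], of j l] that by auto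
  qed
  moreover have "signature \<phi> k = (c, S)"
  proof -
    have "branch_classes \<phi> k i = S i" if "i \<in> I" for i
    proof -
      have "branch_classes \<phi> k i = (\<lambda>j. model_class i k (\<psi> j)) ` {j \<in> J. cls j = i}"
        unfolding branch_classes_def using bl by (intro image_cong) auto
      thus ?thesis using bij[OF that] by (simp add: bij_betw_def)
    qed
    hence "(\<lambda>i\<in>I. branch_classes \<phi> k i) = S" using S_ext by (auto simp: extensional_def fun_eq_iff)
    moreover have "\<phi> a = c" using root_in_V by (simp add: \<phi>_def combine_labeling_def)
    ultimately show ?thesis by (simp add: signature_def)
  qed
  ultimately show ?thesis by (metis rev_image_eqI)
qed

lemma card_signatures:
  assumes "k \<ge> 1"
  shows "card (signatures k)
    = k * (\<Prod>i\<in>I. (D_root (GV i) (GE i) k (r i) div k) choose card {j \<in> J. cls j = i})"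
proof -
  have "card (signatures k) = (\<Sum>c\<in>{1..k}. \<Prod>i\<in>I.
      card {X. X \<subseteq> model_class i k ` dist_labelings_root (GV i) (GE i) (r i) k c
        \<and> card X = card {j \<in> J. cls j = i}})"
    unfolding signatures_def using finite_model_classes finite_types
    by (subst card_SigmaI) (auto simp: card_PiE intro!: finite_PiE)
  also have "\<dots> = (\<Sum>c\<in>{1..k}.
      \<Prod>i\<in>I. (D_root (GV i) (GE i) k (r i) div k) choose card {j \<in> J. cls j = i})"
  proof (intro sum.cong prod.cong refl)
    fix c i assume "c \<in> {1..k}" "i \<in> I"
    thus "card {X. X \<subseteq> model_class i k ` dist_labelings_root (GV i) (GE i) (r i) k c
        \<and> card X = card {j \<in> J. cls j = i}}
      = (D_root (GV i) (GE i) k (r i) div k) choose card {j \<in> J. cls j = i}"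
      using n_subsets[OF finite_model_classes]
        card_lab_classes_root_colour[OF finite_model model_root_mem] by simp
  qed
  finally show ?thesis by simp
qed

theorem D_root_eq_prod_choose:
  assumes "k \<ge> 1"
  shows "D_root V E k a
    = k * (\<Prod>i\<in>I. (D_root (GV i) (GE i) k (r i) div k) choose card {j \<in> J. cls j = i})"
proof -
  have "D_root V E k a = card (lab_class V aut_root k ` root_labelings k)"
    by (simp add: D_root_def D_eq_card_lab_classes)
  also have "\<dots> = card ((\<lambda>\<phi>. signature \<phi> k) ` root_labelings k)"
  proof (intro card_image_eq_if_same_kernel ballI)
    fix \<phi> \<psi> assume "\<phi> \<in> root_labelings k" "\<psi> \<in> root_labelings k"
    thus "lab_class V aut_root k \<phi> = lab_class V aut_root k \<psi> \<longleftrightarrow> signature \<phi> k = signature \<psi> k"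
      using lab_class_eq_iff[of \<phi> V E a k \<psi>] signature_eq_if_lab_equiv lab_equiv_if_signature_eq
      by blast
  qed
  also have "(\<lambda>\<phi>. signature \<phi> k) ` root_labelings k = signatures k"
  proof
    show "(\<lambda>\<phi>. signature \<phi> k) ` root_labelings k \<subseteq> signatures k" using signature_mem by blast
    show "signatures k \<subseteq> (\<lambda>\<phi>. signature \<phi> k) ` root_labelings k"
      using signature_surj by (metis prod.collapse subsetI)
  qed
  finally show ?thesis using card_signatures[OF assms] by simp
qed

end

theorem theorem6:
  fixes V :: "'a set" and E :: "'a \<Rightarrow> 'a \<Rightarrow> bool" and a :: 'a
    and m g :: nat and HV :: "nat \<Rightarrow> 'a set" and HE :: "nat \<Rightarrow> 'a \<Rightarrow> 'a \<Rightarrow> bool"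
    and cls :: "nat \<Rightarrow> nat"
    and GV :: "nat \<Rightarrow> 'b set" and GE :: "nat \<Rightarrow> 'b \<Rightarrow> 'b \<Rightarrow> bool" and r :: "nat \<Rightarrow> 'b"
    and k :: nat
  assumes G: "graph V E" and aV: "a \<in> V" and m: "m \<ge> 1"
    and Hsub: "\<And>j. j \<in> {1..m} \<Longrightarrow> graph (HV j) (HE j) \<and> HV j \<subseteq> V
                    \<and> (\<forall>x y. HE j x y \<longrightarrow> E x y)"
    and Hconn: "\<And>j. j \<in> {1..m} \<Longrightarrow> connected_graph (HV j) (HE j) \<and> a \<in> HV j"
    and Hdel: "\<And>j. j \<in> {1..m} \<Longrightarrow>
                 connected_graph (HV j - {a}) (\<lambda>x y. x \<noteq> a \<and> y \<noteq> a \<and> HE j x y)"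
    and Hdisj: "\<And>j l. j \<in> {1..m} \<Longrightarrow> l \<in> {1..m} \<Longrightarrow> j \<noteq> l \<Longrightarrow> HV j \<inter> HV l = {a}"
    and Vunion: "V = (\<Union>j\<in>{1..m}. HV j)"
    and Eunique: "\<And>x y. E x y \<Longrightarrow> \<exists>!j. j \<in> {1..m} \<and> HE j x y"
    and cls_range: "cls ` {1..m} = {1..g}"
    and cls_equiv: "\<And>j l. j \<in> {1..m} \<Longrightarrow> l \<in> {1..m} \<Longrightarrow>
        rooted_iso (HV j) (HE j) a (HV l) (HE l) a \<longleftrightarrow> cls j = cls l"
    and Gi: "\<And>i. i \<in> {1..g} \<Longrightarrow> graph (GV i) (GE i) \<and> r i \<in> GV i"
    and cls_iso: "\<And>j. j \<in> {1..m} \<Longrightarrow> rooted_iso (HV j) (HE j) a (GV (cls j)) (GE (cls j)) (r (cls j))"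
    and k: "k \<ge> 1"
  shows "D_root V E k a =
           k * (\<Prod>i\<in>{1..g}. (D_root (GV i) (GE i) k (r i) div k) choose card {j \<in> {1..m}. cls j = i})"
proof -
  interpret rooted_branch_decomposition V E a "{1..m}" HV HE "{1..g}" cls GV GE r
  proof
    show "graph V E" "a \<in> V" "V = (\<Union>j\<in>{1..m}. HV j)" "finite {1..m}" "finite {1..g}"
      using G aV Vunion by simp_all
    show "graph (HV j) (HE j)" "a \<in> HV j" "HE j x y \<Longrightarrow> E x y" "cls j \<in> {1..g}"
      "connected_graph (HV j - {a}) (\<lambda>x y. x \<noteq> a \<and> y \<noteq> a \<and> HE j x y)"
      "rooted_iso (HV j) (HE j) a (GV (cls j)) (GE (cls j)) (r (cls j))" if "j \<in> {1..m}" for j x y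
      using Hsub[OF that] Hconn[OF that] Hdel[OF that] cls_iso[OF that] cls_range that by blast+
    show "HV j \<inter> HV l = {a}" if "j \<in> {1..m}" "l \<in> {1..m}" "j \<noteq> l" for j l
      using Hdisj[OF that] .
    show "cls j = cls l"
      if "j \<in> {1..m}" "l \<in> {1..m}" "rooted_iso (HV j) (HE j) a (HV l) (HE l) a" for j l
      using cls_equiv that by blast
    show "\<exists>j\<in>{1..m}. HE j x y" if "E x y" for x y
      using Eunique[OF that] by blast
    show "finite (GV i)" "r i \<in> GV i" if "i \<in> {1..g}" for i
      using Gi[OF that] by (simp_all add: graph_def)
  qed
  show ?thesis using D_root_eq_prod_choose[OF k] .
qed

end
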